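(* The map $\Psi=(F,A)\colon \mathcal{T}(\mathrm{OP})\to I^{\mathcal D}\times I^{\mathbb N}$ defined below is a homeomorphism satisfying $\Psi\circ\kappa(g)=\operatorname{diag}(g)\circ\Psi$ for every $g\in\mathcal D$. In particular, $(\mathcal{T}(\mathrm{OP}),\kappa)$ and $(I^{\mathcal D}\times I^{\mathbb N},\operatorname{diag})$ are isomorphic as topological $\mathcal D$-spaces.
   Context: Let $I=\{0,1\}$. The graded graph $\mathrm{OP}$ (graph of ordered pairs) has vertex sets $\mathrm{OP}_0=I$ and $\mathrm{OP}_{n+1}=\mathrm{OP}_n\times\mathrm{OP}_n$. For each $v=(v_0,v_1)\in\mathrm{OP}_{n+1}$ there is an edge of index $0$ from $v_0$ to $v$ and an edge of index $1$ from $v_1$ to $v$ (two distinct edges if $v_0=v_1$), and there are no other edges. $\mathcal T(\mathrm{OP})$ is the set of infinite paths $x=(v_0,e_0,v_1,e_1,\dots)$ with $v_n\in\mathrm{OP}_n$ and $e_n$ an edge from $v_n$ to $v_{n+1}$, with the topology whose base consists of cylinder sets (paths with a prescribed initial segment). A path is determined by its vertex on floor $N$ together with the indices of its edges below floor $N$. Let $\mathcal D=\bigoplus_{i\ge 0}\mathbb Z/2\mathbb Z$ with generators $g_0,g_1,\dots$, and $\mathcal D_n=\langle g_0,\dots,g_{n-1}\rangle$, $\mathcal D_0=\{0\}$. The canonical action $\kappa$ of $\mathcal D$ on $\mathcal T(\mathrm{OP})$ is defined on generators: $\kappa(g_n)x$ is the path that coincides with $x$ from floor $n+1$ on, whose edge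 from floor $n$ to floor $n+1$ has index different from the corresponding edge of $x$, and whose edges between floors $i$ and $i+1$, $0\le i<n$, have the same indices as those of $x$. $I^{\mathbb N}$ is the set of sequences $\alpha=(\alpha_i)_{i\ge1}$ with coordinatewise addition mod 2; $I^{\mathcal D}$ is the set of configurations $w\colon\mathcal D\to I$; both carry the product topology. Let $\tau\colon\mathcal D\to I^{\mathbb N}$, $\tau(\sum_i\alpha_i g_{i-1})=(\alpha_i)_{i\ge1}$. The action $\operatorname{diag}$ of $\mathcal D$ on $I^{\mathcal D}\times I^{\mathbb N}$ is $\operatorname{diag}(g)(w,\alpha)=(w(\cdot+g),\alpha+\tau(g))$. Define $\Phi$ assigning to each $v\in\mathrm{OP}_n$ a configuration $\Phi[v]\in I^{\mathcal D_n}$: for $v\in\mathrm{OP}_0$, $\Phi[v](0)=v$; for $v=(v_0,v_1)\in\mathrm{OP}_{n+1}$, $\Phi[v](h)=\Phi[v_0](h)$ for $h\in\mathcal D_n$ and $\Phi[v](h)=\Phi[v_1](g_n+h)$ for $h\in\mathcal D_{n+1}\setminus\mathcal D_n$. For a path $x$ with vertices $v_n$ and edges $e_n$, let $A[x]=\alpha$ where $\alpha_n$ is the index of $e_{n-1}$ ($n\ge1$), and let $F[x]\in I^{\mathcal D}$ be given by $F[x](g)=\Phi[v_n](g+\sum_{i=0}^{n-1}\alpha_{i+1}g_i)$ for $g\in\mathcal D_n$, $n\ge1$ (these prescriptions are consistent). Set $\Psi[x]=(F[x],A[x])$. *)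

theory Defs
  imports "HOL-Analysis.Analysis" "HOL-Library.FSet"
begin

text \<open>I = {0,1} is rendered as bool (False = 0, True = 1); addition mod 2 is inequality (xor).\<close>

datatype vtx = OPleaf bool | OPpair vtx vtx

fun OP :: "nat \<Rightarrow> vtx set" where
  "OP 0 = range OPleaf"
| "OP (Suc n) = {OPpair a b | a b. a \<in> OP n \<and> b \<in> OP n}"

text \<open>The source of the edge of index i into a vertex (v0,v1) is v_i.\<close>
fun child :: "bool \<Rightarrow> vtx \<Rightarrow> vtx" where
  "child i (OPpair a b) = (if i then b else a)"
| "child i (OPleaf c) = undefined"

text \<open>A path is a pair (v, e): v n is the vertex on floor n, e n is the index of the edge
  from floor n to floor n+1.\<close>
type_synonym path = "(nat \<Rightarrow> vtx) \<times> (nat \<Rightarrow> bool)"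

definition OPpaths :: "path set" where
  "OPpaths = {(v, e). \<forall>n. v n \<in> OP n \<and> v n = child (e n) (v (Suc n))}"

definition cyl :: "path \<Rightarrow> nat \<Rightarrow> path set" where
  "cyl x n = {y \<in> OPpaths. (\<forall>k\<le>n. fst y k = fst x k) \<and> (\<forall>k<n. snd y k = snd x k)}"

definition OPtop :: "path topology" where
  "OPtop = topology_generated_by {cyl x n | x n. x \<in> OPpaths}"

text \<open>The group D: element sum_{i in S} g_i is represented by the finite set S;
  generator g_n is {|n|}; addition is symmetric difference.\<close>
definition dplus :: "nat fset \<Rightarrow> nat fset \<Rightarrow> nat fset" where
  "dplus g h = (g |-| h) |\<union>| (h |-| g)"

definition Dn :: "nat \<Rightarrow> nat fset set" where
  "Dn n = {g. fset g \<subseteq> {..<n}}"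

text \<open>Path determined by vertex w on floor N and edge indices e below N:
  descend N w e k is the vertex on floor N - k.\<close>
fun descend :: "nat \<Rightarrow> vtx \<Rightarrow> (nat \<Rightarrow> bool) \<Rightarrow> nat \<Rightarrow> vtx" where
  "descend N w e 0 = w"
| "descend N w e (Suc k) = child (e (N - Suc k)) (descend N w e k)"

definition kappa_gen :: "nat \<Rightarrow> path \<Rightarrow> path" where
  "kappa_gen n x = (let v = fst x; e' = (snd x)(n := \<not> snd x n) in
     (\<lambda>m. if n < m then v m else descend (Suc n) (v (Suc n)) e' (Suc n - m), e'))"

definition kappa :: "nat fset \<Rightarrow> path \<Rightarrow> path" where
  "kappa g x = fold kappa_gen (sorted_list_of_set (fset g)) x"

text \<open>I^N: coordinate k of alpha stands for alpha_{k+1}. tau(g) k = alpha_{k+1}.\<close>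
definition tau :: "nat fset \<Rightarrow> nat \<Rightarrow> bool" where
  "tau g k = (k |\<in>| g)"

definition diag :: "nat fset \<Rightarrow> (nat fset \<Rightarrow> bool) \<times> (nat \<Rightarrow> bool) \<Rightarrow> (nat fset \<Rightarrow> bool) \<times> (nat \<Rightarrow> bool)" where
  "diag g p = ((\<lambda>h. fst p (dplus h g)), (\<lambda>k. snd p k \<noteq> tau g k))"

definition target_top :: "((nat fset \<Rightarrow> bool) \<times> (nat \<Rightarrow> bool)) topology" where
  "target_top = prod_topology (product_topology (\<lambda>_. discrete_topology UNIV) UNIV)
                              (product_topology (\<lambda>_. discrete_topology UNIV) UNIV)"

fun Phi :: "nat \<Rightarrow> vtx \<Rightarrow> nat fset \<Rightarrow> bool" where
  "Phi 0 v h = (case v of OPleaf b \<Rightarrow> b | OPpair _ _ \<Rightarrow> undefined)"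
| "Phi (Suc n) v h = (case v of OPpair a b \<Rightarrow>
      (if h \<in> Dn n then Phi n a h else Phi n b (dplus {|n|} h))
    | OPleaf _ \<Rightarrow> undefined)"

definition A :: "path \<Rightarrow> nat \<Rightarrow> bool" where
  "A x = snd x"

definition F :: "path \<Rightarrow> nat fset \<Rightarrow> bool" where
  "F x g = (let n = (LEAST n. 1 \<le> n \<and> g \<in> Dn n) in
     Phi n (fst x n) (dplus g (fset_of_list (filter (snd x) [0..<n]))))"

definition Psi :: "path \<Rightarrow> (nat fset \<Rightarrow> bool) \<times> (nat \<Rightarrow> bool)" where
  "Psi x = (F x, A x)"

end

theory Submission imports Defs begin

text \<open>Splitting \<open>D\<^sub>n\<^sub>+\<^sub>1 = D\<^sub>n \<union> (g\<^sub>n + D\<^sub>n)\<close> shows by induction that \<open>\<Phi>\<close> is a bijection from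
  \<open>OP\<^sub>n\<close> onto \<open>I^D\<^sub>n\<close>. Along a path, the configuration of the vertex on floor \<open>n\<close>, translated
  by the sum \<open>s\<^sub>n\<close> of the generators \<open>g\<^sub>i\<close>, \<open>i < n\<close>, whose edge has index 1, does not depend
  on \<open>n\<close>; this is \<open>F\<close>. The generator \<open>g\<^sub>n\<close> keeps the vertices above floor \<open>n\<close> and replaces
  \<open>s\<^sub>m\<close> by \<open>g\<^sub>n + s\<^sub>m\<close> for \<open>m > n\<close>, which is exactly the action \<open>diag\<close>. Conversely a pair
  \<open>(w, \<alpha>)\<close> prescribes on every floor the unique vertex with the right configuration, and these
  vertices form a path. A cylinder of depth \<open>n\<close> is mapped onto the set of pairs prescribed on the
  finite sets \<open>D\<^sub>n\<close> and \<open>{1..n}\<close>, so \<open>\<Psi>\<close> is continuous and open.\<close>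

lemma fset_dplus: "fset (dplus g h) = (fset g - fset h) \<union> (fset h - fset g)"
  by (auto simp: dplus_def)

lemma dplus_commute: "dplus g h = dplus h g"
  by (auto simp: dplus_def)

lemma dplus_assoc: "dplus (dplus a b) c = dplus a (dplus b c)"
  by (intro fset_eqI) (auto simp: fset_dplus)

lemma dplus_self [simp]: "dplus g g = {||}"
  by (auto simp: dplus_def)

lemma dplus_empty [simp]: "dplus g {||} = g" "dplus {||} g = g"
  by (auto simp: dplus_def)

lemma dplus_cancel_left [simp]: "dplus g (dplus g h) = h"
  by (simp flip: dplus_assoc)

lemma dplus_cancel_right [simp]: "dplus (dplus h g) g = h"
  by (simp add: dplus_assoc)

lemma dplus_dplus_left_cancel: "dplus (dplus a g) (dplus a h) = dplus g h"
  by (intro fset_eqI) (auto simp: fset_dplus)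

lemma Dn_dplus: "g \<in> Dn n \<Longrightarrow> h \<in> Dn n \<Longrightarrow> dplus g h \<in> Dn n"
  by (auto simp: Dn_def fset_dplus)

lemma Dn_mono: "g \<in> Dn m \<Longrightarrow> m \<le> n \<Longrightarrow> g \<in> Dn n"
  by (auto simp: Dn_def)

lemma Dn_empty [simp]: "{||} \<in> Dn n"
  by (auto simp: Dn_def)

lemma dplus_generator_notin_Dn: "h \<in> Dn n \<Longrightarrow> dplus {|n|} h \<notin> Dn n"
  by (auto simp: Dn_def fset_dplus)

lemma dplus_generator_in_Dn_Suc: "h \<in> Dn n \<Longrightarrow> dplus {|n|} h \<in> Dn (Suc n)"
  by (auto simp: Dn_def fset_dplus)

lemma Dn_Suc_diff: "h \<in> Dn (Suc n) \<Longrightarrow> h \<notin> Dn n \<Longrightarrow> dplus {|n|} h \<in> Dn n"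
  by (auto simp: Dn_def fset_dplus less_Suc_eq)

lemma finite_Dn: "finite (Dn n)"
proof -
  have "fset ` Dn n \<subseteq> Pow {..<n}" by (auto simp: Dn_def)
  then have "finite (fset ` Dn n)" by (rule finite_subset) simp
  moreover have "inj_on fset (Dn n)" by (meson fset_inject inj_onI)
  ultimately show ?thesis using finite_imageD by blast
qed

lemma ex_Dn_greater: "\<exists>N. g \<in> Dn N \<and> n < N"
proof -
  obtain m where "\<forall>i\<in>fset g. i < m"
    using finite_nat_set_iff_bounded[of "fset g"] by auto
  then show ?thesis by (intro exI[of _ "Suc (m + n)"]) (fastforce simp: Dn_def)
qed

definition edge_sum :: "nat \<Rightarrow> (nat \<Rightarrow> bool) \<Rightarrow> nat fset" where
  "edge_sum n e = fset_of_list (filter e [0..<n])"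

lemma fset_edge_sum: "fset (edge_sum n e) = {i. i < n \<and> e i}"
  by (auto simp: edge_sum_def fset_of_list.rep_eq)

lemma edge_sum_in_Dn: "edge_sum n e \<in> Dn n"
  by (auto simp: Dn_def fset_edge_sum)

lemma edge_sum_cong: "(\<And>k. k < n \<Longrightarrow> e k = e' k) \<Longrightarrow> edge_sum n e = edge_sum n e'"
  by (intro fset_eqI) (auto simp: fset_edge_sum)

lemma edge_sum_flip: "n < N \<Longrightarrow> edge_sum N (e(n := \<not> e n)) = dplus {|n|} (edge_sum N e)"
  by (intro fset_eqI) (auto simp: fset_edge_sum fset_dplus)

lemma edge_sum_Suc: "edge_sum (Suc n) e = (if e n then dplus {|n|} (edge_sum n e) else edge_sum n e)"
  by (intro fset_eqI) (auto simp: fset_edge_sum fset_dplus less_Suc_eq)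

lemma OP_SucE:
  assumes "v \<in> OP (Suc n)"
  obtains a b where "v = OPpair a b" "a \<in> OP n" "b \<in> OP n"
  using assms by auto

lemma child_in_OP: "v \<in> OP (Suc n) \<Longrightarrow> child i v \<in> OP n"
  by auto

lemma Phi_child:
  assumes "v \<in> OP (Suc n)" and "h \<in> Dn n"
  shows "Phi n (child i v) h = Phi (Suc n) v (if i then dplus {|n|} h else h)"
  using assms dplus_generator_notin_Dn[OF assms(2)] by (elim OP_SucE) auto

lemma Phi_inj:
  "v \<in> OP n \<Longrightarrow> v' \<in> OP n \<Longrightarrow> (\<And>h. h \<in> Dn n \<Longrightarrow> Phi n v h = Phi n v' h) \<Longrightarrow> v = v'"
proof (induction n arbitrary: v v')
  case 0
  then have "Phi 0 v {||} = Phi 0 v' {||}" using Dn_empty by blast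
  with 0 show ?case by auto
next
  case (Suc n)
  have "child i v = child i v'" for i
  proof (rule Suc.IH)
    fix h assume h: "h \<in> Dn n"
    have "(if i then dplus {|n|} h else h) \<in> Dn (Suc n)"
      using Dn_mono[OF h] dplus_generator_in_Dn_Suc[OF h] by simp
    then show "Phi n (child i v) h = Phi n (child i v') h"
      using Suc.prems h by (simp add: Phi_child)
  qed (use Suc.prems child_in_OP in auto)
  from this[of False] this[of True] Suc.prems(1,2) show ?case by (auto elim!: OP_SucE)
qed

lemma Phi_surj: "\<exists>v\<in>OP n. \<forall>h\<in>Dn n. Phi n v h = w h"
proof (induction n arbitrary: w)
  case 0
  have "h = {||}" if "h \<in> Dn 0" for h
    using that by (metis Dn_def bot_fset.rep_eq fset_inject lessThan_0 mem_Collect_eq subset_empty)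
  then show ?case by (intro bexI[of _ "OPleaf (w {||})"]) auto
next
  case (Suc n)
  obtain a where a: "a \<in> OP n" "\<forall>h\<in>Dn n. Phi n a h = w h"
    using Suc.IH[of w] by blast
  obtain b where b: "b \<in> OP n" "\<forall>h\<in>Dn n. Phi n b h = w (dplus {|n|} h)"
    using Suc.IH[of "\<lambda>h. w (dplus {|n|} h)"] by blast
  have "Phi (Suc n) (OPpair a b) h = w h" if "h \<in> Dn (Suc n)" for h
    using a(2) b(2)[rule_format, OF Dn_Suc_diff[OF that]] by (cases "h \<in> Dn n") simp_all
  with a b show ?case by (intro bexI[of _ "OPpair a b"]) auto
qed

lemma Pair_in_OPpaths_iff:
  "(v, e) \<in> OPpaths \<longleftrightarrow> (\<forall>n. v n \<in> OP n \<and> v n = child (e n) (v (Suc n)))"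
  by (simp add: OPpaths_def)

lemma OPpaths_vertex: "x \<in> OPpaths \<Longrightarrow> fst x n \<in> OP n"
  unfolding OPpaths_def mem_Collect_eq case_prod_beta by blast

lemma OPpaths_child: "x \<in> OPpaths \<Longrightarrow> fst x n = child (snd x n) (fst x (Suc n))"
  unfolding OPpaths_def mem_Collect_eq case_prod_beta by blast

lemma Phi_path_Suc:
  assumes x: "x \<in> OPpaths" and g: "g \<in> Dn n"
  shows "Phi (Suc n) (fst x (Suc n)) (dplus g (edge_sum (Suc n) (snd x)))
       = Phi n (fst x n) (dplus g (edge_sum n (snd x)))"
proof -
  let ?h = "dplus g (edge_sum n (snd x))"
  have "Phi n (fst x n) ?h = Phi (Suc n) (fst x (Suc n)) (if snd x n then dplus {|n|} ?h else ?h)"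
    unfolding OPpaths_child[OF x, of n]
    using Phi_child[OF OPpaths_vertex[OF x] Dn_dplus[OF g edge_sum_in_Dn]] .
  also have "(if snd x n then dplus {|n|} ?h else ?h) = dplus g (edge_sum (Suc n) (snd x))"
    by (simp add: edge_sum_Suc dplus_commute[of "{|n|}"] dplus_assoc)
  finally show ?thesis by (rule sym)
qed

lemma Phi_path_mono:
  assumes x: "x \<in> OPpaths" and g: "g \<in> Dn m" and "m \<le> M"
  shows "Phi M (fst x M) (dplus g (edge_sum M (snd x)))
       = Phi m (fst x m) (dplus g (edge_sum m (snd x)))"
  using \<open>m \<le> M\<close>
proof (induction M rule: dec_induct)
  case (step n)
  then show ?case using Phi_path_Suc[OF x Dn_mono[OF g]] by simp
qed simp

lemma F_eq_Phi:
  assumes x: "x \<in> OPpaths" and g: "g \<in> Dn N"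
  shows "F x g = Phi N (fst x N) (dplus g (edge_sum N (snd x)))"
proof -
  define n where "n = (LEAST n. 1 \<le> n \<and> g \<in> Dn n)"
  have "1 \<le> Suc N \<and> g \<in> Dn (Suc N)" using Dn_mono[OF g] by simp
  then have n: "g \<in> Dn n" unfolding n_def by (metis (mono_tags, lifting) LeastI)
  have "F x g = Phi n (fst x n) (dplus g (edge_sum n (snd x)))"
    unfolding F_def edge_sum_def n_def Let_def by simp
  then show ?thesis using Phi_path_mono[OF x n, of N] Phi_path_mono[OF x g, of n] by fastforce
qed

lemma Phi_eq_F:
  assumes x: "x \<in> OPpaths" and h: "h \<in> Dn N"
  shows "Phi N (fst x N) h = F x (dplus h (edge_sum N (snd x)))"
  using F_eq_Phi[OF x Dn_dplus[OF h edge_sum_in_Dn]] by simp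

lemma descend_in_OP: "w \<in> OP N \<Longrightarrow> k \<le> N \<Longrightarrow> descend N w e k \<in> OP (N - k)"
proof (induction k)
  case (Suc k)
  then have "descend N w e k \<in> OP (Suc (N - Suc k))" by (simp add: Suc_diff_Suc)
  then show ?case by (simp add: child_in_OP)
qed simp

lemma snd_kappa_gen: "snd (kappa_gen n x) = (snd x)(n := \<not> snd x n)"
  by (simp add: kappa_gen_def Let_def)

lemma fst_kappa_gen: "n < m \<Longrightarrow> fst (kappa_gen n x) m = fst x m"
  by (simp add: kappa_gen_def Let_def)

lemma kappa_gen_in_OPpaths:
  assumes x: "x \<in> OPpaths"
  shows "kappa_gen n x \<in> OPpaths"
proof -
  define e where "e = (snd x)(n := \<not> snd x n)"
  define w where "w = fst x (Suc n)"
  define v where "v = (\<lambda>m. if n < m then fst x m else descend (Suc n) w e (Suc n - m))"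
  have w: "w \<in> OP (Suc n)" unfolding w_def using OPpaths_vertex[OF x] .
  have kappa: "kappa_gen n x = (v, e)"
    unfolding kappa_gen_def Let_def v_def e_def w_def by simp
  have "v m \<in> OP m \<and> v m = child (e m) (v (Suc m))" for m
  proof (cases "n < m")
    case True
    then show ?thesis
      using OPpaths_vertex[OF x, of m] OPpaths_child[OF x, of m] by (simp add: v_def e_def)
  next
    case False
    then have "v m \<in> OP m" using descend_in_OP[OF w, of "Suc n - m" e] by (simp add: v_def)
    moreover have "Suc n - m = Suc (Suc n - Suc m)" if "m < n" using that by simp
    ultimately show ?thesis using False by (cases "m = n") (auto simp: v_def w_def)
  qed
  then show ?thesis unfolding kappa Pair_in_OPpaths_iff by blast
qed

lemma diag_diag: "diag g (diag h p) = diag (dplus h g) p"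
  by (auto simp: diag_def tau_def fset_dplus dplus_assoc dplus_commute[of g h])

lemma diag_empty: "diag {||} p = p"
  by (simp add: diag_def tau_def)

lemma Psi_kappa_gen:
  assumes x: "x \<in> OPpaths"
  shows "Psi (kappa_gen n x) = diag {|n|} (Psi x)"
proof -
  have "F (kappa_gen n x) h = F x (dplus h {|n|})" for h
  proof -
    obtain N where N: "h \<in> Dn N" "n < N" using ex_Dn_greater by blast
    then have "dplus h {|n|} \<in> Dn N" by (auto simp: Dn_def fset_dplus)
    with N show ?thesis
      using F_eq_Phi[OF kappa_gen_in_OPpaths[OF x] N(1)] F_eq_Phi[OF x]
      by (simp add: fst_kappa_gen snd_kappa_gen edge_sum_flip dplus_assoc)
  qed
  then show ?thesis by (auto simp: Psi_def A_def diag_def tau_def snd_kappa_gen)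
qed

lemma Psi_fold_kappa_gen:
  "distinct ns \<Longrightarrow> x \<in> OPpaths \<Longrightarrow>
   fold kappa_gen ns x \<in> OPpaths \<and> Psi (fold kappa_gen ns x) = diag (fset_of_list ns) (Psi x)"
proof (induction ns arbitrary: x)
  case (Cons n ns)
  have "dplus {|n|} (fset_of_list ns) = fset_of_list (n # ns)"
    using Cons.prems(1) by (intro fset_eqI) (auto simp: fset_dplus fset_of_list.rep_eq)
  then show ?case using Cons.IH[OF _ kappa_gen_in_OPpaths] Cons.prems
    by (simp add: Psi_kappa_gen diag_diag)
qed (simp add: diag_empty)

lemma Psi_kappa:
  assumes "x \<in> OPpaths"
  shows "Psi (kappa g x) = diag g (Psi x)"
proof -
  have "fset_of_list (sorted_list_of_set (fset g)) = g"
    by (intro fset_eqI) (simp add: fset_of_list.rep_eq)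
  then show ?thesis
    using Psi_fold_kappa_gen[OF _ assms, of "sorted_list_of_set (fset g)"] by (simp add: kappa_def)
qed

lemma Psi_inj:
  assumes x: "x \<in> OPpaths" and y: "y \<in> OPpaths" and eq: "Psi x = Psi y"
  shows "x = y"
proof -
  have e: "snd x = snd y" and f: "F x = F y" using eq by (auto simp: Psi_def A_def)
  have "fst x N = fst y N" for N
    by (rule Phi_inj[OF OPpaths_vertex[OF x] OPpaths_vertex[OF y]])
      (simp add: Phi_eq_F[OF x] Phi_eq_F[OF y] e f)
  then show ?thesis using e by (simp add: prod_eq_iff fun_eq_iff)
qed

lemma Psi_surj: "\<exists>x\<in>OPpaths. Psi x = (w, \<alpha>)"
proof -
  have "\<exists>v. v \<in> OP n \<and> (\<forall>h\<in>Dn n. Phi n v h = w (dplus h (edge_sum n \<alpha>)))" for n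
    using Phi_surj[of n "\<lambda>h. w (dplus h (edge_sum n \<alpha>))"] by blast
  then obtain V where
    V: "V n \<in> OP n" "\<And>h. h \<in> Dn n \<Longrightarrow> Phi n (V n) h = w (dplus h (edge_sum n \<alpha>))" for n
    by metis
  have "V n = child (\<alpha> n) (V (Suc n))" for n
  proof (rule Phi_inj[OF V(1) child_in_OP[OF V(1)]])
    fix h assume h: "h \<in> Dn n"
    let ?h = "if \<alpha> n then dplus {|n|} h else h"
    have h': "?h \<in> Dn (Suc n)" using Dn_mono[OF h] dplus_generator_in_Dn_Suc[OF h] by simp
    have "dplus ?h (edge_sum (Suc n) \<alpha>) = dplus h (edge_sum n \<alpha>)"
      by (simp add: edge_sum_Suc dplus_dplus_left_cancel)
    then show "Phi n (V n) h = Phi n (child (\<alpha> n) (V (Suc n))) h"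
      using V(2)[OF h] V(2)[OF h'] Phi_child[OF V(1) h] by simp
  qed
  then have path: "(V, \<alpha>) \<in> OPpaths" unfolding Pair_in_OPpaths_iff using V(1) by blast
  have "F (V, \<alpha>) g = w g" for g
  proof -
    obtain N where N: "g \<in> Dn N" using ex_Dn_greater by blast
    then show ?thesis using F_eq_Phi[OF path N] V(2)[OF Dn_dplus[OF N edge_sum_in_Dn]] by simp
  qed
  then have "Psi (V, \<alpha>) = (w, \<alpha>)" by (simp add: Psi_def A_def fun_eq_iff)
  with path show ?thesis by blast
qed

lemma cyl_subset_OPpaths: "cyl x n \<subseteq> OPpaths"
  by (auto simp: cyl_def)

lemma in_cyl_self: "x \<in> OPpaths \<Longrightarrow> x \<in> cyl x n"
  by (auto simp: cyl_def)

lemma topspace_OPtop: "topspace OPtop = OPpaths"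
  unfolding OPtop_def topology_generated_by_topspace
  using cyl_subset_OPpaths in_cyl_self by blast

lemma openin_OPtop:
  assumes "T \<subseteq> OPpaths" and "\<And>x. x \<in> T \<Longrightarrow> \<exists>N. cyl x N \<subseteq> T"
  shows "openin OPtop T"
proof -
  let ?C = "{cyl x n | x n. x \<in> OPpaths}"
  have "T = \<Union>{c \<in> ?C. c \<subseteq> T}"
  proof
    show "T \<subseteq> \<Union>{c \<in> ?C. c \<subseteq> T}"
    proof
      fix x assume x: "x \<in> T"
      then obtain N where "cyl x N \<subseteq> T" using assms(2) by blast
      with x assms(1) in_cyl_self show "x \<in> \<Union>{c \<in> ?C. c \<subseteq> T}" by blast
    qed
  qed blast
  moreover have "generate_topology_on ?C (\<Union>{c \<in> ?C. c \<subseteq> T})"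
    by (rule generate_topology_on.UN) (auto intro: generate_topology_on.Basis)
  ultimately show ?thesis unfolding OPtop_def openin_topology_generated_by_iff by simp
qed

lemma continuous_map_OPtop_discrete:
  assumes "\<And>x. x \<in> OPpaths \<Longrightarrow> \<exists>N. \<forall>y\<in>cyl x N. f y = f x"
  shows "continuous_map OPtop (discrete_topology UNIV) f"
  unfolding continuous_map_def topspace_OPtop
proof (intro conjI allI impI)
  fix U
  show "openin OPtop {x \<in> OPpaths. f x \<in> U}"
  proof (rule openin_OPtop)
    fix x assume "x \<in> {x \<in> OPpaths. f x \<in> U}"
    then show "\<exists>N. cyl x N \<subseteq> {x \<in> OPpaths. f x \<in> U}"
      using assms cyl_subset_OPpaths by fastforce
  qed auto
qed auto

lemma F_cyl:
  assumes x: "x \<in> OPpaths" and y: "y \<in> cyl x N" and g: "g \<in> Dn N"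
  shows "F y g = F x g"
proof -
  have y': "y \<in> OPpaths" "fst y N = fst x N" and e: "\<And>k. k < N \<Longrightarrow> snd y k = snd x k"
    using y by (auto simp: cyl_def)
  from e have "edge_sum N (snd y) = edge_sum N (snd x)" by (rule edge_sum_cong)
  then show ?thesis using F_eq_Phi[OF x g] F_eq_Phi[OF y'(1) g] y'(2) by simp
qed

lemma continuous_map_Psi: "continuous_map OPtop target_top Psi"
proof -
  have "continuous_map OPtop (discrete_topology UNIV) (\<lambda>x. F x g)" for g
  proof (rule continuous_map_OPtop_discrete)
    fix x assume "x \<in> OPpaths"
    moreover obtain N where "g \<in> Dn N" using ex_Dn_greater by blast
    ultimately show "\<exists>N. \<forall>y\<in>cyl x N. F y g = F x g" using F_cyl by blast
  qed
  moreover have "continuous_map OPtop (discrete_topology UNIV) (\<lambda>x. A x k)" for k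
    by (rule continuous_map_OPtop_discrete, rule exI[of _ "Suc k"]) (auto simp: cyl_def A_def)
  ultimately show ?thesis
    unfolding target_top_def Psi_def[abs_def] continuous_map_paired
    by (simp add: continuous_map_componentwise_UNIV)
qed

lemma OPpaths_eq_below:
  assumes x: "x \<in> OPpaths" and y: "y \<in> OPpaths" and "fst y n = fst x n"
    and e: "\<And>k. k < n \<Longrightarrow> snd y k = snd x k" and "k \<le> n"
  shows "fst y k = fst x k"
  using \<open>k \<le> n\<close>
proof (induction k rule: inc_induct)
  case (step k)
  then show ?case using OPpaths_child[OF x, of k] OPpaths_child[OF y, of k] e[of k] by simp
qed (rule \<open>fst y n = fst x n\<close>)

lemma Psi_image_cyl:
  assumes x: "x \<in> OPpaths"
  shows "Psi ` cyl x n = {w. \<forall>h\<in>Dn n. w h = F x h} \<times> {\<alpha>. \<forall>k<n. \<alpha> k = snd x k}"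
proof
  show "Psi ` cyl x n \<subseteq> {w. \<forall>h\<in>Dn n. w h = F x h} \<times> {\<alpha>. \<forall>k<n. \<alpha> k = snd x k}"
    using F_cyl[OF x] by (auto simp: Psi_def A_def cyl_def)
next
  show "{w. \<forall>h\<in>Dn n. w h = F x h} \<times> {\<alpha>. \<forall>k<n. \<alpha> k = snd x k} \<subseteq> Psi ` cyl x n"
  proof (clarify)
    fix w \<alpha> assume w: "\<forall>h\<in>Dn n. w h = F x h" and \<alpha>: "\<forall>k<n. \<alpha> k = snd x k"
    obtain y where y: "y \<in> OPpaths" "Psi y = (w, \<alpha>)" using Psi_surj by blast
    then have Fy: "F y = w" and e: "snd y = \<alpha>" by (auto simp: Psi_def A_def)
    have es: "edge_sum n (snd y) = edge_sum n (snd x)" using \<alpha> e by (intro edge_sum_cong) simp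
    have "fst y n = fst x n"
    proof (rule Phi_inj[OF OPpaths_vertex[OF y(1)] OPpaths_vertex[OF x]])
      fix h assume h: "h \<in> Dn n"
      then show "Phi n (fst y n) h = Phi n (fst x n) h"
        using w Dn_dplus[OF h edge_sum_in_Dn] by (simp add: Phi_eq_F[OF y(1)] Phi_eq_F[OF x] Fy es)
    qed
    then have "y \<in> cyl x n"
      using OPpaths_eq_below[OF x y(1)] \<alpha> e y(1) by (auto simp: cyl_def)
    with y(2) show "(w, \<alpha>) \<in> Psi ` cyl x n" by force
  qed
qed

lemma openin_product_discrete_coordinate:
  "openin (product_topology (\<lambda>_. discrete_topology UNIV) UNIV) {w. w i = c}"
proof -
  have "openin (product_topology (\<lambda>_. discrete_topology UNIV) UNIV)
          {w \<in> topspace (product_topology (\<lambda>_. discrete_topology UNIV) UNIV). w i \<in> {c}}"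
    by (rule openin_continuous_map_preimage[OF continuous_map_product_projection]) auto
  then show ?thesis by simp
qed

lemma openin_product_discrete_finite:
  assumes "finite S"
  shows "openin (product_topology (\<lambda>_. discrete_topology UNIV) UNIV) {w. \<forall>i\<in>S. w i = c i}"
proof -
  let ?P = "product_topology (\<lambda>_. discrete_topology UNIV) UNIV"
  have "openin ?P ((\<Inter>i\<in>S. {w. w i = c i}) \<inter> topspace ?P)"
    using assms openin_product_discrete_coordinate by (rule openin_INT)
  moreover have "(\<Inter>i\<in>S. {w. w i = c i}) \<inter> topspace ?P = {w. \<forall>i\<in>S. w i = c i}"
    by auto
  ultimately show ?thesis by simp
qed

lemma open_map_Psi: "open_map OPtop target_top Psi"
  unfolding open_map_def
proof (intro allI impI)
  fix U assume "openin OPtop U"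
  then have "generate_topology_on {cyl x n | x n. x \<in> OPpaths} U"
    unfolding OPtop_def openin_topology_generated_by_iff .
  then have "U \<subseteq> OPpaths \<and> openin target_top (Psi ` U)"
  proof (induction rule: generate_topology_on.induct)
    case (Int a b)
    have "Psi ` (a \<inter> b) = Psi ` a \<inter> Psi ` b"
      using Int.IH by (intro inj_on_image_Int[of _ OPpaths]) (auto intro: inj_onI Psi_inj)
    then show ?case using Int.IH by (auto intro: openin_Int)
  next
    case (UN K)
    then show ?case by (auto simp: image_Union intro: openin_Union)
  next
    case (Basis s)
    then obtain x n where s: "s = cyl x n" and x: "x \<in> OPpaths" by blast
    have "openin target_top (Psi ` s)"
      unfolding s Psi_image_cyl[OF x] target_top_def openin_prod_Times_iff
      using openin_product_discrete_finite[OF finite_Dn[of n], where c = "F x"]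
        openin_product_discrete_finite[OF finite_lessThan[of n], where c = "snd x"]
      by (simp add: Ball_def)
    with cyl_subset_OPpaths s show ?case by blast
  qed simp
  then show "openin target_top (Psi ` U)" by blast
qed

theorem theorem1:
  shows "homeomorphic_map OPtop target_top Psi \<and>
         (\<forall>g. \<forall>x\<in>OPpaths. Psi (kappa g x) = diag g (Psi x))"
proof
  have "p \<in> Psi ` OPpaths" for p
    using Psi_surj[of "fst p" "snd p"] by force
  then have "Psi ` topspace OPtop = topspace target_top"
    by (auto simp: topspace_OPtop target_top_def)
  moreover have "inj_on Psi (topspace OPtop)"
    by (auto simp: topspace_OPtop intro: inj_onI Psi_inj)
  ultimately show "homeomorphic_map OPtop target_top Psi"
    by (rule bijective_open_imp_homeomorphic_map[OF continuous_map_Psi open_map_Psi])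
  show "\<forall>g. \<forall>x\<in>OPpaths. Psi (kappa g x) = diag g (Psi x)"
    using Psi_kappa by blast
qed

end
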